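(* $R(\mathscr N)\subset[0,1]\setminus\mathscr N$. Consequently $R$ is a singular Borel function: there is a Lebesgue-null set $Z=[0,1]\setminus\mathscr N$ with $\lambda(R^{-1}(Z))=1$, where $\lambda$ is Lebesgue measure.
   Context: Define $\rho$ on binary words: for $b=b_1b_2\dots$, $\rho(b)$ is obtained by deleting every digit $b_n=0$ and replacing every $b_n=1$ by $0$ if $n$ is odd and by $1$ if $n$ is even. For $x\in(0,1]$ let $\beta(x)$ be the unique binary expansion of $x$ with infinitely many $1$'s. Define $R:[0,1]\to[0,1]$ by $R(0)=2/3$ and, for $x\in(0,1]$, $R(x)=\sum_{n\ge1}c_n2^{-n}$ where $c=\rho(\beta(x))$. $\mathscr N\subset[0,1]$ denotes the set of numbers normal in base $2$. *)

theory Defs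
  imports "HOL-Analysis.Analysis" "HOL-Library.Infinite_Set"
begin

text \<open>Binary words are sequences b :: nat => nat, indexed from 1 (b 0 is unused, set to 0).\<close>

definition beta :: "real \<Rightarrow> (nat \<Rightarrow> nat)" where
  "beta x = (THE b. b 0 = 0 \<and> (\<forall>n. b n \<le> 1) \<and> infinite {n. b n = 1}
                 \<and> (\<lambda>n. real (b n) / 2 ^ n) sums x)"

text \<open>rho b: delete the digits 0 and replace the digit 1 at position n by 0 if n is odd and
  by 1 if n is even. Position k (k >= 1) of the result comes from the k-th one of b.\<close>
definition rho :: "(nat \<Rightarrow> nat) \<Rightarrow> (nat \<Rightarrow> nat)" where
  "rho b k = (let S = {n. 1 \<le> n \<and> b n = 1} in
     if 1 \<le> k \<and> (infinite S \<or> k \<le> card S)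
     then (if even (Infinite_Set.enumerate S (k - 1)) then 1 else 0)
     else 0)"

definition R :: "real \<Rightarrow> real" where
  "R x = (if x = 0 then 2/3 else (\<Sum>n. real (rho (beta x) n) / 2 ^ n))"

definition bdig :: "real \<Rightarrow> nat \<Rightarrow> nat" where
  "bdig x n = nat (\<lfloor>2 ^ n * x\<rfloor> mod 2)"

definition normal2 :: "real set" where
  "normal2 = {x \<in> {0..1}. \<forall>w. w \<noteq> [] \<and> set w \<subseteq> {0, 1} \<longrightarrow>
      ((\<lambda>N. real (card {i \<in> {1..N}. \<forall>j < length w. bdig x (i + j) = w ! j}) / real N)
        \<longlonglongrightarrow> 1 / 2 ^ length w)}"

end

theory Submission
  imports Defs "HOL-Library.Discrete_Functions" "HOL-Real_Asymp.Real_Asymp"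
begin

text \<open>For normal \<open>x\<close> the expansion \<^term>\<open>beta x\<close> is the ordinary binary expansion, and the
  \<open>k\<close>-th digit of \<open>R x\<close> is the parity of the position of the \<open>k\<close>-th one of \<open>x\<close>. Two consecutive
  digits of \<open>R x\<close> therefore agree exactly when the gap between the corresponding ones of \<open>x\<close> is
  even. A gap of length \<open>j + 1\<close> is an occurrence of the block \<open>1 0^j 1\<close>, so normality of \<open>x\<close> makes
  the even gaps a fraction \<open>1/3\<close> of all gaps, whereas in a normal number the blocks \<open>00\<close> and \<open>11\<close>
  together have frequency \<open>1/2\<close>. The measure-theoretic part is Borel's theorem that almost every
  number is normal, obtained from a second-moment bound for block counts, Chebyshev's inequality
  and Borel--Cantelli along the squares.\<close>

section \<open>Binary expansions\<close>

text \<open>The integer \<open>\<lceil>2^n x\<rceil> - 1\<close> has as binary digits the first \<open>n\<close> digits of the expansion of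
  \<open>x\<close> with infinitely many ones, just as \<open>\<lfloor>2^n x\<rfloor>\<close> does for the expansion used by \<^const>\<open>bdig\<close>.\<close>
definition cdig :: "real \<Rightarrow> nat \<Rightarrow> nat" where
  "cdig x n = (if n = 0 then 0 else nat ((\<lceil>2^n * x\<rceil> - 1) mod 2))"

lemma nat_mod_2_le_1: "nat (k mod 2) \<le> 1"
  by (simp add: nat_le_iff)

lemma bdig_le_1: "bdig x n \<le> 1"
  unfolding bdig_def by (rule nat_mod_2_le_1)

lemma cdig_le_1: "cdig x n \<le> 1"
  unfolding cdig_def using nat_mod_2_le_1[of "\<lceil>2^n * x\<rceil> - 1"] by simp

lemma binary_prefix_Suc:
  "(\<Sum>k\<le>Suc n. (b k::nat) * 2^(Suc n - k)) = 2 * (\<Sum>k\<le>n. b k * 2^(n - k)) + b (Suc n)"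
proof -
  have "(\<Sum>k\<le>n. b k * 2^(Suc n - k)) = (\<Sum>k\<le>n. 2 * (b k * 2^(n - k)))"
    by (intro sum.cong refl) (simp add: Suc_diff_le)
  then show ?thesis by (simp add: sum_distrib_left)
qed

lemma binary_prefix_mod_2:
  assumes "\<And>n. (b::nat \<Rightarrow> nat) n \<le> 1" and "n \<ge> 1"
  shows "(\<Sum>k\<le>n. b k * 2^(n - k)) mod 2 = b n"
proof -
  obtain m where n: "n = Suc m" using assms(2) by (cases n) auto
  show ?thesis using assms(1)[of n] unfolding n binary_prefix_Suc by simp
qed

lemma binary_tail_sums:
  fixes b :: "nat \<Rightarrow> nat"
  assumes "(\<lambda>n. real (b n) / 2^n) sums x"
  shows "(\<lambda>k. real (b (k + n + 1)) / 2^(k + 1)) sums (2^n * x - real (\<Sum>k\<le>n. b k * 2^(n - k)))"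
proof -
  let ?f = "\<lambda>n. real (b n) / 2^n"
  have "(\<lambda>i. ?f (i + Suc n)) sums (x - (\<Sum>i<Suc n. ?f i))"
    using assms sums_iff_shift[of ?f "Suc n"] by simp
  then have "(\<lambda>i. 2^n * ?f (i + Suc n)) sums (2^n * (x - (\<Sum>i<Suc n. ?f i)))"
    by (rule sums_mult)
  moreover have "2^n * ?f (i + Suc n) = real (b (i + n + 1)) / 2^(i + 1)" for i
    by (simp add: power_add)
  moreover have "2^n * (\<Sum>i<Suc n. ?f i) = real (\<Sum>k\<le>n. b k * 2^(n - k))"
  proof -
    have "2^n * ?f k = real (b k * 2^(n - k))" if "k \<le> n" for k
    proof -
      obtain d where "n = k + d" using \<open>k \<le> n\<close> le_Suc_ex by auto
      then show ?thesis by (simp add: power_add)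
    qed
    then show ?thesis by (simp add: sum_distrib_left lessThan_Suc_atMost)
  qed
  ultimately show ?thesis by (simp add: right_diff_distrib)
qed

lemma series_dominated_by_halves:
  fixes g :: "nat \<Rightarrow> real"
  assumes nonneg: "\<And>k. 0 \<le> g k" and le: "\<And>k. g k \<le> 1 / 2^(k + 1)"
  shows "summable g" "suminf g \<le> 1" "0 < g i \<Longrightarrow> 0 < suminf g"
    "g j < 1 / 2^(j + 1) \<Longrightarrow> suminf g < 1"
proof -
  have halves: "(\<lambda>k. 1 / (2::real)^(k + 1)) sums 1"
    using power_half_series by (simp add: power_divide)
  show g: "summable g"
    by (rule summable_comparison_test'[OF sums_summable[OF halves]]) (use le nonneg in simp)
  show "suminf g \<le> 1"
    using suminf_le[OF le g sums_summable[OF halves]] sums_unique[OF halves] by simp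
  show "0 < suminf g" if "0 < g i" by (rule suminf_pos2[OF g nonneg that])
  show "suminf g < 1" if "g j < 1 / 2^(j + 1)"
  proof -
    have "(\<lambda>k. 1 / 2^(k + 1) - g k) sums (1 - suminf g)"
      using sums_diff[OF halves summable_sums[OF g]] .
    moreover have "0 < (\<Sum>k. 1 / 2^(k + 1) - g k)"
      by (rule suminf_pos2[of _ j]) (use calculation le that in \<open>auto simp: sums_iff\<close>)
    ultimately show ?thesis by (simp add: sums_iff)
  qed
qed

lemma binary_tail_bounds:
  fixes b :: "nat \<Rightarrow> nat" and n :: nat
  assumes b: "\<And>n. b n \<le> 1"
  defines "T \<equiv> (\<Sum>k. real (b (k + n + 1)) / 2^(k + 1))"
  shows "0 \<le> T" "T \<le> 1" "\<exists>m>n. b m = 1 \<Longrightarrow> 0 < T" "\<exists>m>n. b m = 0 \<Longrightarrow> T < 1"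
proof -
  let ?g = "\<lambda>k. real (b (k + n + 1)) / 2^(k + 1)"
  have le: "?g k \<le> 1 / 2^(k + 1)" for k
    using b[of "k + n + 1"] by (intro divide_right_mono) auto
  have nonneg: "0 \<le> ?g k" for k by simp
  note dom = series_dominated_by_halves[of ?g, OF nonneg le, folded T_def]
  show "0 \<le> T" unfolding T_def by (rule suminf_nonneg[OF dom(1) nonneg])
  show "T \<le> 1" by (rule dom(2))
  show "0 < T" if one: "\<exists>m>n. b m = 1"
  proof -
    obtain m where "m > n" "b m = 1" using one by auto
    then show ?thesis using dom(3)[of "m - n - 1"] by simp
  qed
  show "T < 1" if zero: "\<exists>m>n. b m = 0"
  proof -
    obtain m where "m > n" "b m = 0" using zero by auto
    then show ?thesis using dom(4)[of "m - n - 1"] by simp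
  qed
qed

lemma expansion_eq_cdig:
  fixes b :: "nat \<Rightarrow> nat"
  assumes "b 0 = 0" and b: "\<And>n. b n \<le> 1" and ones: "infinite {n. b n = 1}"
    and x: "(\<lambda>n. real (b n) / 2^n) sums x"
  shows "b = cdig x"
proof
  fix n
  let ?P = "\<Sum>k\<le>n. b k * 2^(n - k)" and ?T = "\<Sum>k. real (b (k + n + 1)) / 2^(k + 1)"
  show "b n = cdig x n"
  proof (cases "n = 0")
    case False
    have "?T = 2^n * x - real ?P" using binary_tail_sums[OF x, of n] by (simp add: sums_iff)
    moreover have "0 < ?T" "?T \<le> 1"
      using binary_tail_bounds[of b n, OF b] ones[unfolded infinite_nat_iff_unbounded] by auto
    ultimately have "\<lceil>2^n * x\<rceil> = int ?P + 1" by (intro ceiling_unique) auto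
    then show ?thesis
      using binary_prefix_mod_2[OF b, of n] False unfolding cdig_def by (simp add: nat_mod_as_int)
  qed (simp add: assms(1) cdig_def)
qed

lemma expansion_eq_bdig:
  fixes b :: "nat \<Rightarrow> nat"
  assumes b: "\<And>n. b n \<le> 1" and zeros: "infinite {n. b n = 0}"
    and x: "(\<lambda>n. real (b n) / 2^n) sums x" and "n \<ge> 1"
  shows "bdig x n = b n"
proof -
  let ?P = "\<Sum>k\<le>n. b k * 2^(n - k)" and ?T = "\<Sum>k. real (b (k + n + 1)) / 2^(k + 1)"
  have "?T = 2^n * x - real ?P" using binary_tail_sums[OF x, of n] by (simp add: sums_iff)
  moreover have "0 \<le> ?T" "?T < 1"
    using binary_tail_bounds[of b n, OF b] zeros[unfolded infinite_nat_iff_unbounded] by auto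
  ultimately have "\<lfloor>2^n * x\<rfloor> = int ?P" by (intro floor_unique) auto
  then show ?thesis
    using binary_prefix_mod_2[OF b \<open>n \<ge> 1\<close>] unfolding bdig_def by (simp add: nat_mod_as_int)
qed

lemma ceiling_double_pred_div_2: "(\<lceil>2 * y\<rceil> - 1) div 2 = \<lceil>y\<rceil> - (1::int)"
proof -
  have "2 * \<lceil>y\<rceil> - 2 < \<lceil>2 * y\<rceil>" "\<lceil>2 * y\<rceil> \<le> 2 * \<lceil>y\<rceil>"
    by (simp_all add: less_ceiling_iff ceiling_le_iff) linarith+
  then have "\<lceil>2 * y\<rceil> = 2 * \<lceil>y\<rceil> - 1 \<or> \<lceil>2 * y\<rceil> = 2 * \<lceil>y\<rceil>" by linarith
  then show ?thesis by auto
qed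

lemma cdig_partial_sums:
  assumes "0 < x" "x \<le> 1"
  shows "(\<Sum>k\<le>n. real (cdig x k) / 2^k) = real_of_int (\<lceil>2^n * x\<rceil> - 1) / 2^n"
proof (induction n)
  case 0
  have "\<lceil>x\<rceil> = 1" using assms by (simp add: ceiling_eq_iff)
  then show ?case by (simp add: cdig_def)
next
  case (Suc n)
  let ?c = "\<lambda>n. \<lceil>2^n * x\<rceil> - 1"
  have "?c (Suc n) div 2 = ?c n"
    using ceiling_double_pred_div_2[of "2^n * x"] by (simp add: mult.assoc)
  moreover have "int (cdig x (Suc n)) = ?c (Suc n) mod 2" by (simp add: cdig_def)
  ultimately have "?c (Suc n) = 2 * ?c n + int (cdig x (Suc n))" by (metis mult_div_mod_eq)
  then have "real_of_int (?c (Suc n)) = 2 * real_of_int (?c n) + real (cdig x (Suc n))"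
    by (metis of_int_add of_int_mult of_int_numeral of_int_of_nat_eq)
  then show ?case using Suc.IH by (simp add: field_simps)
qed

lemma cdig_sums:
  assumes "0 < x" "x \<le> 1"
  shows "(\<lambda>n. real (cdig x n) / 2^n) sums x"
  unfolding sums_def_le cdig_partial_sums[OF assms]
proof (rule real_tendsto_sandwich[where f="\<lambda>n. x - (1/2)^n" and h="\<lambda>n. x"])
  have "x - (1/2)^n \<le> real_of_int (\<lceil>2^n * x\<rceil> - 1) / 2^n \<and> real_of_int (\<lceil>2^n * x\<rceil> - 1) / 2^n \<le> x" for n
  proof -
    have "2^n * x - 1 \<le> real_of_int (\<lceil>2^n * x\<rceil> - 1)" "real_of_int (\<lceil>2^n * x\<rceil> - 1) \<le> 2^n * x"
      by linarith+
    then show ?thesis by (simp add: field_simps power_one_over)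
  qed
  then show "\<forall>\<^sub>F n in sequentially. x - (1/2)^n \<le> real_of_int (\<lceil>2^n * x\<rceil> - 1) / 2^n"
    "\<forall>\<^sub>F n in sequentially. real_of_int (\<lceil>2^n * x\<rceil> - 1) / 2^n \<le> x"
    by simp_all
  show "(\<lambda>n. x - (1/2::real)^n) \<longlonglongrightarrow> x"
    using tendsto_diff[OF tendsto_const LIMSEQ_power_zero[of "1/2::real"]] by simp
qed simp

lemma cdig_infinite_ones:
  assumes "0 < x" "x \<le> 1"
  shows "infinite {n. cdig x n = 1}"
proof
  assume "finite {n. cdig x n = 1}"
  then obtain n0 where n0: "\<forall>n\<in>{n. cdig x n = 1}. n \<le> n0"
    unfolding finite_nat_set_iff_bounded_le ..
  have zero: "cdig x n = 0" if "n0 < n" for n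
  proof -
    have "cdig x n \<noteq> 1" using n0 that by auto
    then show ?thesis using cdig_le_1[of x n] by linarith
  qed
  \<comment> \<open>the partial sums become constant, so \<open>x\<close> equals one of them, contradicting \<open>\<lceil>y\<rceil> - 1 < y\<close>\<close>
  let ?s = "\<lambda>n. \<Sum>k\<le>n. real (cdig x k) / 2^k"
  have "?s (n + n0) = ?s n0" for n
    by (rule sum.mono_neutral_right) (auto simp: zero)
  then have "(\<lambda>n. ?s (n + n0)) \<longlonglongrightarrow> ?s n0"
    by simp
  moreover have "(\<lambda>n. ?s (n + n0)) \<longlonglongrightarrow> x"
    using LIMSEQ_ignore_initial_segment[OF cdig_sums[OF assms, unfolded sums_def_le]] .
  ultimately have "?s n0 = x"
    by (rule LIMSEQ_unique)
  then have "x = real_of_int (\<lceil>2^n0 * x\<rceil> - 1) / 2^n0"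
    unfolding cdig_partial_sums[OF assms] by simp
  then have "2^n0 * x = real_of_int (\<lceil>2^n0 * x\<rceil> - 1)" by (simp add: field_simps)
  then show False by linarith
qed

lemma beta_eq_cdig:
  assumes "0 < x" "x \<le> 1"
  shows "beta x = cdig x"
  unfolding beta_def
proof (rule the_equality)
  show "cdig x 0 = 0 \<and> (\<forall>n. cdig x n \<le> 1) \<and> infinite {n. cdig x n = 1}
      \<and> (\<lambda>n. real (cdig x n) / 2^n) sums x"
    using cdig_le_1 cdig_infinite_ones[OF assms] cdig_sums[OF assms] by (simp add: cdig_def)
next
  fix b :: "nat \<Rightarrow> nat"
  assume "b 0 = 0 \<and> (\<forall>n. b n \<le> 1) \<and> infinite {n. b n = 1} \<and> (\<lambda>n. real (b n) / 2^n) sums x"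
  then show "b = cdig x" by (intro expansion_eq_cdig) auto
qed

section \<open>Normal numbers and the positions of their ones\<close>

definition block_at :: "real \<Rightarrow> nat list \<Rightarrow> nat \<Rightarrow> bool" where
  "block_at x w i \<longleftrightarrow> (\<forall>j<length w. bdig x (i + j) = w ! j)"

definition block_count :: "real \<Rightarrow> nat list \<Rightarrow> nat \<Rightarrow> nat" where
  "block_count x w N = card {i\<in>{1..N}. block_at x w i}"

lemma normal2_iff:
  "x \<in> normal2 \<longleftrightarrow> x \<in> {0..1} \<and> (\<forall>w. w \<noteq> [] \<and> set w \<subseteq> {0, 1} \<longrightarrow>
     (\<lambda>N. real (block_count x w N) / real N) \<longlonglongrightarrow> 1 / 2 ^ length w)"
  unfolding normal2_def block_count_def block_at_def by simp

lemma normal2_block_frequency: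
  assumes "x \<in> normal2" "w \<noteq> []" "set w \<subseteq> {0, 1}"
  shows "(\<lambda>N. real (block_count x w N) / real N) \<longlonglongrightarrow> 1 / 2 ^ length w"
  using assms normal2_iff by blast

lemma normal2_subset: "normal2 \<subseteq> {0..1}"
  by (auto simp: normal2_def)

lemma normal2_digit_recurs:
  assumes x: "x \<in> normal2" and "v \<le> 1"
  shows "\<exists>m>n. bdig x m = v"
proof (rule ccontr)
  assume "\<not> (\<exists>m>n. bdig x m = v)"
  then have "{i\<in>{1..N}. block_at x [v] i} \<subseteq> {1..n}" for N
    by (auto simp: block_at_def not_less)
  then have "block_count x [v] N \<le> n" for N
    unfolding block_count_def using card_mono[of "{1..n}"] by fastforce
  then have "real (block_count x [v] N) / real N \<le> real n / real N" for N
    by (intro divide_right_mono) auto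
  moreover have "(\<lambda>N. real (block_count x [v] N) / real N) \<longlonglongrightarrow> 1 / 2"
    using normal2_block_frequency[OF x, of "[v]"] \<open>v \<le> 1\<close> by (auto simp: le_Suc_eq)
  ultimately have "1 / 2 \<le> (0::real)"
    using LIMSEQ_le[OF _ lim_const_over_n] by blast
  then show False by simp
qed

lemma normal2_not_dyadic:
  assumes x: "x \<in> normal2"
  shows "2^n * x \<notin> \<int>"
proof
  assume "2^n * x \<in> \<int>"
  then obtain K where K: "2^n * x = of_int K" by (auto elim: Ints_cases)
  have "bdig x m = 0" if "m > n" for m
  proof -
    obtain d where d: "m = n + Suc d" using \<open>m > n\<close> less_iff_Suc_add by auto
    have "2^m * x = of_int (2^Suc d * K)" using K by (simp add: d power_add)
    then have "\<lfloor>2^m * x\<rfloor> = 2^Suc d * K" by (metis floor_of_int)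
    then show ?thesis by (simp add: bdig_def)
  qed
  with normal2_digit_recurs[OF x, of 1 n] show False by fastforce
qed

lemma normal2_pos: "x \<in> normal2 \<Longrightarrow> 0 < x"
  using normal2_not_dyadic[of x 0] normal2_subset by (cases "x = 0") auto

lemma beta_normal2:
  assumes x: "x \<in> normal2" and "n \<ge> 1"
  shows "beta x n = bdig x n"
proof -
  have "2^n * x \<noteq> real_of_int \<lfloor>2^n * x\<rfloor>"
    using normal2_not_dyadic[OF x, of n] by (metis Ints_of_int)
  then have "\<lceil>2^n * x\<rceil> = \<lfloor>2^n * x\<rfloor> + 1"
    by (simp add: ceiling_altdef)
  moreover have "0 < x" "x \<le> 1" using normal2_pos[OF x] normal2_subset x by auto
  ultimately show ?thesis using \<open>n \<ge> 1\<close> by (simp add: beta_eq_cdig cdig_def bdig_def)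
qed

definition ones :: "real \<Rightarrow> nat set" where
  "ones x = {n. 1 \<le> n \<and> bdig x n = 1}"

definition one_pos :: "real \<Rightarrow> nat \<Rightarrow> nat" where
  "one_pos x = enumerate (ones x)"

definition one_gap :: "real \<Rightarrow> nat \<Rightarrow> nat" where
  "one_gap x k = one_pos x (Suc k) - one_pos x k"

definition gap_block :: "nat \<Rightarrow> nat list" where
  "gap_block j = 1 # replicate j 0 @ [1]"

lemma length_gap_block [simp]: "length (gap_block j) = j + 2"
  by (simp add: gap_block_def)

lemma gap_block_binary: "gap_block j \<noteq> []" "set (gap_block j) \<subseteq> {0, 1}"
  by (auto simp: gap_block_def)

lemma nth_gap_block: "t < j + 2 \<Longrightarrow> gap_block j ! t = (if t = 0 \<or> t = j + 1 then 1 else 0)"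
  by (auto simp: gap_block_def nth_Cons nth_append split: nat.splits)

context
  fixes x :: real
  assumes x: "x \<in> normal2"
begin

lemma infinite_ones: "infinite (ones x)"
  unfolding infinite_nat_iff_unbounded
proof
  fix m
  obtain n where "n > m" "bdig x n = 1" using normal2_digit_recurs[OF x, of 1 m] by auto
  then show "\<exists>n>m. n \<in> ones x" by (auto simp: ones_def)
qed

lemma one_pos_in_ones: "one_pos x k \<in> ones x"
  unfolding one_pos_def using enumerate_in_set[OF infinite_ones] .

lemma one_pos_ge_1: "1 \<le> one_pos x k" and bdig_one_pos: "bdig x (one_pos x k) = 1"
  using one_pos_in_ones[of k] by (auto simp: ones_def)

lemma strict_mono_one_pos: "strict_mono (one_pos x)"
  unfolding strict_mono_def one_pos_def using enumerate_mono[OF _ infinite_ones] by blast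

lemma one_pos_le_iff: "one_pos x a \<le> one_pos x b \<longleftrightarrow> a \<le> b"
  using strict_mono_one_pos by (simp add: strict_mono_less_eq)

lemma one_pos_Suc_le: "s \<in> ones x \<Longrightarrow> one_pos x k < s \<Longrightarrow> one_pos x (Suc k) \<le> s"
  unfolding one_pos_def enumerate_Suc''[OF infinite_ones] by (rule Least_le) simp

lemma ones_eq_range_one_pos: "ones x = range (one_pos x)"
  unfolding one_pos_def using enumerate_Ex[OF infinite_ones] enumerate_in_set[OF infinite_ones] by auto

lemma one_pos_Suc: "one_pos x (Suc k) = one_pos x k + one_gap x k"
  using strict_monoD[OF strict_mono_one_pos, of k "Suc k"] by (simp add: one_gap_def)

lemma bdig_between_one_pos:
  assumes "one_pos x k < s" "s < one_pos x (Suc k)"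
  shows "bdig x s = 0"
proof -
  have "s \<notin> ones x" using one_pos_Suc_le[of s k] assms by auto
  then show ?thesis using one_pos_ge_1[of k] bdig_le_1[of x s] assms by (auto simp: ones_def)
qed

lemma block_at_gap_block_iff:
  "block_at x (gap_block j) (one_pos x k) \<longleftrightarrow> one_gap x k = j + 1"
proof
  let ?i = "one_pos x k"
  assume block: "block_at x (gap_block j) ?i"
  then have digit: "bdig x (?i + t) = (if t = 0 \<or> t = j + 1 then 1 else 0)" if "t < j + 2" for t
    using that by (simp add: block_at_def nth_gap_block)
  have "?i + j + 1 \<in> ones x" "?i < ?i + j + 1" using digit[of "j + 1"] by (auto simp: ones_def)
  then have "one_pos x (Suc k) \<le> ?i + j + 1" using one_pos_Suc_le by simp
  moreover have "\<not> one_pos x (Suc k) < ?i + j + 1"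
    using digit[of "one_gap x k"] one_pos_Suc[of k] bdig_one_pos[of "Suc k"]
      strict_monoD[OF strict_mono_one_pos, of k "Suc k"]
    by auto
  ultimately show "one_gap x k = j + 1" using one_pos_Suc[of k] by simp
next
  assume gap: "one_gap x k = j + 1"
  have "bdig x (one_pos x k + t) = gap_block j ! t" if "t < j + 2" for t
  proof (cases "t = 0 \<or> t = j + 1")
    case True
    then show ?thesis
      using that nth_gap_block bdig_one_pos[of k] bdig_one_pos[of "Suc k"] one_pos_Suc[of k] gap
      by auto
  next
    case False
    then show ?thesis
      using that nth_gap_block bdig_between_one_pos[of k] one_pos_Suc[of k] gap by simp
  qed
  then show "block_at x (gap_block j) (one_pos x k)" by (simp add: block_at_def)
qed

lemma block_count_gap_block:
  "block_count x (gap_block j) (one_pos x K) = card {k\<in>{..K}. one_gap x k = j + 1}"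
proof -
  have "{i\<in>{1..one_pos x K}. block_at x (gap_block j) i} = one_pos x ` {k\<in>{..K}. one_gap x k = j + 1}"
  proof (intro set_eqI iffI)
    fix i assume i: "i \<in> {i\<in>{1..one_pos x K}. block_at x (gap_block j) i}"
    then have "i \<in> ones x" by (auto simp: ones_def block_at_def nth_gap_block)
    then obtain k where "i = one_pos x k" using ones_eq_range_one_pos by auto
    with i show "i \<in> one_pos x ` {k\<in>{..K}. one_gap x k = j + 1}"
      by (auto simp: block_at_gap_block_iff one_pos_le_iff)
  qed (use one_pos_ge_1 in \<open>auto simp: block_at_gap_block_iff one_pos_le_iff\<close>)
  then show ?thesis
    unfolding block_count_def
    by (simp add: card_image[OF strict_mono_imp_inj_on[OF strict_mono_one_pos]])
qed

lemma block_count_one: "block_count x [1] (one_pos x K) = K + 1"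
proof -
  have "{i\<in>{1..one_pos x K}. block_at x [1] i} = {i \<in> ones x. i \<le> one_pos x K}"
    by (auto simp: block_at_def ones_def)
  also have "\<dots> = one_pos x ` {..K}"
    unfolding ones_eq_range_one_pos by (auto simp: one_pos_le_iff)
  finally show ?thesis
    unfolding block_count_def
    by (simp add: card_image strict_mono_imp_inj_on[OF strict_mono_one_pos])
qed

lemma block_frequency_along_one_pos:
  assumes "w \<noteq> []" "set w \<subseteq> {0, 1}"
  shows "(\<lambda>K. real (block_count x w (one_pos x K)) / real (one_pos x K)) \<longlonglongrightarrow> 1 / 2 ^ length w"
  using LIMSEQ_subseq_LIMSEQ[OF normal2_block_frequency[OF x assms] strict_mono_one_pos]
  by (simp add: comp_def)

end

section \<open>The digits of \<open>R x\<close> for normal \<open>x\<close>\<close>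

lemma sum_card_fibres_le:
  fixes T :: nat and f :: "nat \<Rightarrow> 'a"
  assumes "finite A" "inj f" "\<And>t. P (f t)"
  shows "(\<Sum>t<T. card {k\<in>A. g k = f t}) \<le> card {k\<in>A. P (g k)}"
proof -
  have "(\<Sum>t<T. card {k\<in>A. g k = f t}) = card (\<Union>t<T. {k\<in>A. g k = f t})"
    by (rule card_UN_disjoint[symmetric]) (use assms(1,2) in \<open>auto dest: injD\<close>)
  also have "\<dots> \<le> card {k\<in>A. P (g k)}"
    using assms(1,3) by (intro card_mono) auto
  finally show ?thesis .
qed

lemma sum_quarter_powers: "(\<Sum>t<T. 1 / (2::real)^(2 * t + m)) = 4/3 * (1 - (1/4)^T) / 2^m"
proof (induction T)
  case (Suc T)
  have "(2::real)^(2 * T + m) = 4^T * 2^m" by (simp add: power_add power_mult)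
  then have "(\<Sum>t<Suc T. 1 / (2::real)^(2 * t + m)) = 4/3 * (1 - (1/4)^T) / 2^m + 1 / (4^T * 2^m)"
    using Suc.IH by simp
  also have "\<dots> = 4/3 * (1 - (1/4)^Suc T) / 2^m" by (simp add: field_simps power_one_over)
  finally show ?case .
qed simp

definition even_gaps :: "real \<Rightarrow> nat \<Rightarrow> nat" where
  "even_gaps x K = card {k\<in>{..K}. even (one_gap x k)}"

context
  fixes x :: real
  assumes x: "x \<in> normal2"
begin

lemma one_pos_pos: "0 < real (one_pos x K)"
  using one_pos_ge_1[OF x, of K] by simp

lemma even_gaps_lower:
  "(\<Sum>t<T. block_count x (gap_block (2 * t + 1)) (one_pos x K)) \<le> even_gaps x K"
  unfolding block_count_gap_block[OF x] even_gaps_def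
  by (rule sum_card_fibres_le) (auto simp: inj_def)

lemma even_gaps_upper:
  "(\<Sum>t<T. block_count x (gap_block (2 * t)) (one_pos x K)) + even_gaps x K \<le> K + 1"
proof -
  let ?E = "{k\<in>{..K}. even (one_gap x k)}" and ?O = "{k\<in>{..K}. odd (one_gap x k)}"
  have "(\<Sum>t<T. block_count x (gap_block (2 * t)) (one_pos x K)) \<le> card ?O"
    unfolding block_count_gap_block[OF x] by (rule sum_card_fibres_le) (auto simp: inj_def)
  moreover have "card ?E + card ?O = card (?E \<union> ?O)"
    by (rule card_Un_disjoint[symmetric]) auto
  moreover have "?E \<union> ?O = {..K}"
    by auto
  ultimately show ?thesis unfolding even_gaps_def by simp
qed

text \<open>A gap of length \<open>j + 1\<close> follows a fraction \<open>2^-(j+2)\<close> of the digit positions, and even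
  gaps have \<open>j\<close> odd; summing over \<open>j\<close> gives \<open>1/6\<close>, against \<open>1/2\<close> for the ones themselves.\<close>
lemma even_gaps_per_digit: "(\<lambda>K. real (even_gaps x K) / real (one_pos x K)) \<longlonglongrightarrow> 1/6"
proof (rule order_tendstoI)
  let ?freq = "\<lambda>w K. real (block_count x w (one_pos x K)) / real (one_pos x K)"
  fix a :: real assume "a < 1/6"
  then obtain T where T: "(1/4::real)^T < 1 - 6 * a"
    using real_arch_pow_inv[of "1 - 6 * a" "1/4"] by auto
  have lim: "(\<lambda>K. \<Sum>t<T. ?freq (gap_block (2 * t + 1)) K) \<longlonglongrightarrow> (\<Sum>t<T. 1 / 2^(2 * t + 1 + 2))"
    by (intro tendsto_sum block_frequency_along_one_pos[OF x, THEN tendsto_eq_rhs]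
        gap_block_binary) simp
  have "(\<Sum>t<T. 1 / (2::real)^(2 * t + 1 + 2)) = (\<Sum>t<T. 1 / 2^(2 * t + 3))"
    by (simp add: numeral_3_eq_3)
  moreover have "4/3 * (1 - (1/4::real)^T) / 2^3 = 1/6 - (1/4)^T / 6"
    by simp
  ultimately have "a < (\<Sum>t<T. 1 / (2::real)^(2 * t + 1 + 2))"
    unfolding sum_quarter_powers using T by linarith
  with lim have ev: "\<forall>\<^sub>F K in sequentially. a < (\<Sum>t<T. ?freq (gap_block (2 * t + 1)) K)"
    by (rule order_tendstoD)
  have le: "(\<Sum>t<T. ?freq (gap_block (2 * t + 1)) K) \<le> real (even_gaps x K) / real (one_pos x K)"
    for K
    unfolding sum_divide_distrib[symmetric] of_nat_sum[symmetric]
    using even_gaps_lower one_pos_pos by (intro divide_right_mono of_nat_mono) auto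
  show "\<forall>\<^sub>F K in sequentially. a < real (even_gaps x K) / real (one_pos x K)"
    by (rule eventually_mono[OF ev]) (rule less_le_trans[OF _ le])
next
  let ?freq = "\<lambda>w K. real (block_count x w (one_pos x K)) / real (one_pos x K)"
  fix a :: real assume "1/6 < a"
  then obtain T where T: "(1/4::real)^T < 3 * a - 1/2"
    using real_arch_pow_inv[of "3 * a - 1/2" "1/4"] by auto
  have lim: "(\<lambda>K. ?freq [1] K - (\<Sum>t<T. ?freq (gap_block (2 * t)) K))
      \<longlonglongrightarrow> 1/2 - (\<Sum>t<T. 1 / 2^(2 * t + 2))"
    by (intro tendsto_diff tendsto_sum block_frequency_along_one_pos[OF x, THEN tendsto_eq_rhs]
        gap_block_binary) simp_all
  have "1/2 - (\<Sum>t<T. 1 / (2::real)^(2 * t + 2)) < a"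
    unfolding sum_quarter_powers using T by (simp add: field_simps)
  with lim have ev: "\<forall>\<^sub>F K in sequentially. ?freq [1] K - (\<Sum>t<T. ?freq (gap_block (2 * t)) K) < a"
    by (rule order_tendstoD)
  have le: "real (even_gaps x K) / real (one_pos x K)
      \<le> ?freq [1] K - (\<Sum>t<T. ?freq (gap_block (2 * t)) K)" for K
  proof -
    have "real (even_gaps x K)
        \<le> real (K + 1) - real (\<Sum>t<T. block_count x (gap_block (2 * t)) (one_pos x K))"
      using even_gaps_upper[where T = T and K = K] by linarith
    then show ?thesis
      unfolding sum_divide_distrib[symmetric] of_nat_sum[symmetric] diff_divide_distrib[symmetric]
        block_count_one[OF x]
      using one_pos_pos by (intro divide_right_mono) auto
  qed
  show "\<forall>\<^sub>F K in sequentially. real (even_gaps x K) / real (one_pos x K) < a"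
    by (rule eventually_mono[OF ev]) (rule le_less_trans[OF le])
qed

lemma even_gaps_frequency: "(\<lambda>K. real (even_gaps x K) / real (K + 1)) \<longlonglongrightarrow> 1/3"
proof -
  have ones: "(\<lambda>K. real (K + 1) / real (one_pos x K)) \<longlonglongrightarrow> 1/2"
    using block_frequency_along_one_pos[OF x, of "[1]"] unfolding block_count_one[OF x] by simp
  have "(\<lambda>K. (real (even_gaps x K) / real (one_pos x K)) / (real (K + 1) / real (one_pos x K)))
      \<longlonglongrightarrow> (1/6) / (1/2)"
    by (rule tendsto_divide[OF even_gaps_per_digit ones]) simp
  moreover have "one_pos x K \<noteq> 0" for K
    using one_pos_ge_1[OF x, of K] by simp
  ultimately show ?thesis by (simp add: field_simps)
qed

lemma rho_beta_normal2:
  "rho (beta x) k = (if 1 \<le> k \<and> even (one_pos x (k - 1)) then 1 else 0)"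
proof -
  have "{n. 1 \<le> n \<and> beta x n = 1} = ones x"
    using beta_normal2[OF x] by (auto simp: ones_def)
  then show ?thesis using infinite_ones[OF x] by (simp add: rho_def one_pos_def Let_def)
qed

lemma rho_beta_le_1: "rho (beta x) k \<le> 1"
  by (simp add: rho_beta_normal2)

lemma rho_beta_repeats:
  "card {k\<in>{1..Suc K}. rho (beta x) k = rho (beta x) (Suc k)} = even_gaps x K"
proof -
  have "rho (beta x) (Suc k) = rho (beta x) (Suc (Suc k)) \<longleftrightarrow> even (one_gap x k)" for k
    using one_pos_Suc[OF x, of k] by (simp add: rho_beta_normal2)
  then have "{k\<in>{1..Suc K}. rho (beta x) k = rho (beta x) (Suc k)}
      = Suc ` {k\<in>{..K}. even (one_gap x k)}"
    by (force simp: image_iff Suc_le_eq gr0_conv_Suc)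
  then show ?thesis by (simp add: even_gaps_def card_image)
qed

lemma rho_beta_repeat_frequency:
  "(\<lambda>N. real (card {k\<in>{1..N}. rho (beta x) k = rho (beta x) (Suc k)}) / real N) \<longlonglongrightarrow> 1/3"
proof -
  have "(\<lambda>N. real (card {k\<in>{1..Suc N}. rho (beta x) k = rho (beta x) (Suc k)}) / real (Suc N))
      \<longlonglongrightarrow> 1/3"
    using even_gaps_frequency unfolding rho_beta_repeats by simp
  then show ?thesis by (rule filterlim_sequentially_Suc[THEN iffD1])
qed

lemma rho_beta_infinite_zeros: "infinite {n. rho (beta x) n = 0}"
proof
  let ?repeats = "\<lambda>N. card {k\<in>{1..N}. rho (beta x) k = rho (beta x) (Suc k)}"
  assume "finite {n. rho (beta x) n = 0}"
  then obtain n0 where n0: "\<forall>n\<in>{n. rho (beta x) n = 0}. n \<le> n0"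
    unfolding finite_nat_set_iff_bounded_le ..
  have "rho (beta x) k = 1" if "k > n0" for k
  proof -
    have "rho (beta x) k \<noteq> 0" using n0 that by auto
    then show ?thesis using rho_beta_le_1[of k] by linarith
  qed
  then have "{n0 + 1..N} \<subseteq> {k\<in>{1..N}. rho (beta x) k = rho (beta x) (Suc k)}" for N
    by auto
  then have card_le: "card {n0 + 1..N} \<le> ?repeats N" for N
    by (intro card_mono) auto
  have "real N - real n0 \<le> real (?repeats N)" for N
  proof -
    have "real N - real n0 \<le> real (card {n0 + 1..N})"
      by (cases "n0 \<le> N") (simp_all add: of_nat_diff)
    then show ?thesis using card_le[of N] by linarith
  qed
  then have "1 - real n0 / real N \<le> real (?repeats N) / real N" if "N \<ge> 1" for N
    using that divide_right_mono[of "real N - real n0" "real (?repeats N)" "real N"]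
    by (simp add: diff_divide_distrib)
  then have "\<exists>N0. \<forall>N\<ge>N0. 1 - real n0 / real N \<le> real (?repeats N) / real N"
    by blast
  moreover have "(\<lambda>N. 1 - real n0 / real N) \<longlonglongrightarrow> 1 - 0"
    by (intro tendsto_diff tendsto_const lim_const_over_n)
  ultimately have "1 - 0 \<le> (1/3::real)"
    by (rule LIMSEQ_le[OF _ rho_beta_repeat_frequency, rotated])
  then show False by simp
qed

lemma R_normal2: "R x = (\<Sum>n. real (rho (beta x) n) / 2^n)"
  using normal2_pos[OF x] by (simp add: R_def)

lemma R_sums: "(\<lambda>n. real (rho (beta x) n) / 2^n) sums R x"
proof -
  have "summable (\<lambda>n. real (rho (beta x) n) / 2^n)"
  proof (rule summable_comparison_test'[OF summable_geometric[of "1/2"]])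
    show "norm (real (rho (beta x) n) / 2^n) \<le> (1/2)^n" for n
      using rho_beta_le_1[of n] by (simp add: power_one_over divide_right_mono)
  qed simp
  then show ?thesis unfolding R_normal2 by (rule summable_sums)
qed

lemma bdig_R: "n \<ge> 1 \<Longrightarrow> bdig (R x) n = rho (beta x) n"
  by (rule expansion_eq_bdig[OF rho_beta_le_1 rho_beta_infinite_zeros R_sums])

lemma R_normal2_in_unit_interval: "R x \<in> {0..1}"
proof -
  let ?g = "\<lambda>k. real (rho (beta x) (k + 1)) / 2^(k + 1)"
  have "rho (beta x) 0 = 0" by (simp add: rho_beta_normal2)
  then have "?g sums R x"
    using R_sums sums_Suc_iff[of "\<lambda>n. real (rho (beta x) n) / 2^n"] by simp
  moreover have "?g k \<le> 1 / 2^(k + 1)" for k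
    using rho_beta_le_1[of "k + 1"] by (intro divide_right_mono) auto
  ultimately show ?thesis
    using series_dominated_by_halves(1,2)[of ?g] suminf_nonneg[of ?g] by (simp add: sums_iff)
qed

lemma R_normal2_not_normal2: "R x \<notin> normal2"
proof
  assume y: "R x \<in> normal2"
  have pair: "block_at (R x) [a, a] k \<longleftrightarrow> bdig (R x) k = a \<and> bdig (R x) (Suc k) = a" for a k
    by (auto simp: block_at_def less_Suc_eq nth_Cons split: nat.splits)
  have "rho (beta x) k = rho (beta x) (Suc k) \<longleftrightarrow> block_at (R x) [0, 0] k \<or> block_at (R x) [1, 1] k"
    if "k \<ge> 1" for k
    using bdig_R[of k] bdig_R[of "Suc k"] bdig_le_1[of "R x" k] that
    unfolding pair by (auto simp: le_Suc_eq)
  then have repeats: "{k\<in>{1..N}. rho (beta x) k = rho (beta x) (Suc k)}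
      = {k\<in>{1..N}. block_at (R x) [0, 0] k} \<union> {k\<in>{1..N}. block_at (R x) [1, 1] k}" for N
    by auto
  have "card {k\<in>{1..N}. rho (beta x) k = rho (beta x) (Suc k)}
      = block_count (R x) [0, 0] N + block_count (R x) [1, 1] N" for N
    unfolding repeats block_count_def by (rule card_Un_disjoint) (auto simp: pair)
  moreover have "(\<lambda>N. real (block_count (R x) [0, 0] N) / real N
      + real (block_count (R x) [1, 1] N) / real N) \<longlonglongrightarrow> 1/4 + 1/4"
    by (intro tendsto_add normal2_block_frequency[OF y, THEN tendsto_eq_rhs]) simp_all
  ultimately have "(\<lambda>N. real (card {k\<in>{1..N}. rho (beta x) k = rho (beta x) (Suc k)}) / real N)
      \<longlonglongrightarrow> 1/2"
    by (simp add: add_divide_distrib)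
  with rho_beta_repeat_frequency show False
    using LIMSEQ_unique by fastforce
qed

end

section \<open>Measurability of \<open>R\<close>\<close>

lemma enumerate_eq_iff:
  fixes S :: "nat set"
  assumes S: "infinite S"
  shows "enumerate S j = m \<longleftrightarrow> m \<in> S \<and> card {s\<in>S. s < m} = j"
proof -
  have "card {s\<in>S. s < enumerate S k} = k" for k
  proof -
    have "{s\<in>S. s < enumerate S k} = enumerate S ` {..<k}"
      using enumerate_Ex[OF S] enumerate_in_set[OF S] enumerate_mono_iff[OF S] by blast
    then show ?thesis by (simp add: card_image inj_on_subset[OF inj_enumerate[OF S]])
  qed
  then show ?thesis
    using enumerate_Ex[OF S] enumerate_in_set[OF S] by metis
qed

text \<open>Unlike the definition through \<^const>\<open>enumerate\<close>, this form is visibly Borel in the digits.\<close>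
lemma rho_altdef:
  fixes b :: "nat \<Rightarrow> nat"
  assumes b: "\<And>n. b n \<le> 1" and ones: "infinite {n. b n = 1}" and "b 0 = 0"
  shows "rho b n = (if 1 \<le> n \<and> (\<exists>m. even m \<and> b m = 1 \<and> (\<Sum>i\<in>{1..<m}. real (b i)) = real (n - 1))
    then 1 else 0)"
proof -
  let ?S = "{n. b n = 1}"
  have S: "{n. 1 \<le> n \<and> b n = 1} = ?S" using \<open>b 0 = 0\<close> by (auto simp: Suc_le_eq intro!: gr0I)
  have count: "(\<Sum>i\<in>{1..<m}. real (b i)) = real (card {s\<in>?S. s < m})" for m
  proof -
    have "(\<Sum>i\<in>{1..<m}. real (b i)) = (\<Sum>i\<in>{1..<m}. if b i = 1 then 1 else 0)"
      using b by (intro sum.cong refl) (metis le_neq_implies_less less_one of_nat_0 of_nat_1)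
    also have "\<dots> = real (card {i\<in>{1..<m}. b i = 1})"
      by (simp add: sum.If_cases Int_def)
    also have "{i\<in>{1..<m}. b i = 1} = {s\<in>?S. s < m}"
      using S by auto
    finally show ?thesis .
  qed
  have "(\<exists>m. even m \<and> m \<in> ?S \<and> card {s\<in>?S. s < m} = j) \<longleftrightarrow> even (enumerate ?S j)" for j
  proof
    assume "\<exists>m. even m \<and> m \<in> ?S \<and> card {s\<in>?S. s < m} = j"
    then obtain m where "even m" "m \<in> ?S" "card {s\<in>?S. s < m} = j" by blast
    then have "enumerate ?S j = m" using enumerate_eq_iff[OF ones, of j m] by blast
    with \<open>even m\<close> show "even (enumerate ?S j)" by simp
  next
    assume "even (enumerate ?S j)"
    then show "\<exists>m. even m \<and> m \<in> ?S \<and> card {s\<in>?S. s < m} = j"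
      using enumerate_eq_iff[OF ones, of j "enumerate ?S j"] by blast
  qed
  then show ?thesis
    unfolding rho_def Let_def S count of_nat_eq_iff using ones by simp
qed

definition R_explicit :: "real \<Rightarrow> real" where
  "R_explicit x = (if x = 0 then 2/3 else
     (\<Sum>n. (if 1 \<le> n \<and> (\<exists>m. even m \<and> cdig x m = 1 \<and> (\<Sum>i\<in>{1..<m}. real (cdig x i)) = real (n - 1))
       then 1 else 0) / 2^n))"

lemma cdig_measurable [measurable]: "(\<lambda>x. cdig x n) \<in> borel \<rightarrow>\<^sub>M count_space UNIV"
proof -
  have "(\<lambda>x::real. \<lceil>2^n * x\<rceil>) \<in> borel \<rightarrow>\<^sub>M count_space UNIV" by measurable
  then show ?thesis unfolding cdig_def
    by (rule measurable_compose[where g = "\<lambda>k. if n = 0 then 0 else nat ((k - 1) mod 2)"]) simp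
qed

lemma cdig_0: "cdig x 0 = 0"
  by (simp add: cdig_def)

lemma R_explicit_measurable: "R_explicit \<in> borel_measurable borel"
  unfolding R_explicit_def by measurable

lemma R_eq_R_explicit:
  assumes "x \<in> {0..1}"
  shows "R x = R_explicit x"
proof (cases "x = 0")
  case False
  then have x: "0 < x" "x \<le> 1" using assms by auto
  have "real (rho (beta x) n) = (if 1 \<le> n \<and> (\<exists>m. even m \<and> cdig x m = 1
      \<and> (\<Sum>i\<in>{1..<m}. real (cdig x i)) = real (n - 1)) then 1 else 0)" for n
    unfolding beta_eq_cdig[OF x] rho_altdef[OF cdig_le_1 cdig_infinite_ones[OF x] cdig_0]
    by (simp only: if_distrib[of real] of_nat_1 of_nat_0)
  then show ?thesis using False by (simp only: R_def R_explicit_def if_False)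
qed (simp add: R_def R_explicit_def)

lemma R_measurable: "R \<in> borel_measurable (restrict_space borel {0..1})"
proof -
  have "R_explicit \<in> borel_measurable (restrict_space borel {0..1})"
    by (rule measurable_restrict_space1[OF R_explicit_measurable])
  then show ?thesis
    by (rule measurable_cong[THEN iffD1, rotated]) (simp add: R_eq_R_explicit space_restrict_space)
qed

section \<open>Lebesgue measure of digit cylinders\<close>

lemma bdig_measurable [measurable]: "(\<lambda>x. bdig x n) \<in> borel \<rightarrow>\<^sub>M count_space UNIV"
proof -
  have "(\<lambda>x::real. \<lfloor>2^n * x\<rfloor>) \<in> borel \<rightarrow>\<^sub>M count_space UNIV" by measurable
  then show ?thesis unfolding bdig_def
    by (rule measurable_compose[where g = "\<lambda>k. nat (k mod 2)"]) simp
qed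

lemma emeasure_lborel_doubling_preimage:
  fixes B :: "real set"
  assumes [measurable]: "B \<in> sets borel"
  shows "emeasure lborel {x. 2 * x - e \<in> B} = emeasure lborel B / 2"
proof -
  have "emeasure lborel B = ennreal \<bar>2\<bar> * (\<integral>\<^sup>+x. indicator B (- e + 2 * x) \<partial>lborel)"
    unfolding nn_integral_indicator[OF assms[unfolded sets_lborel[symmetric]], symmetric]
    by (rule nn_integral_real_affine) auto
  also have "(\<lambda>x. indicator B (- e + 2 * x) :: ennreal) = indicator {x. 2 * x - e \<in> B}"
    by (auto simp: indicator_def)
  finally have "emeasure lborel B = 2 * emeasure lborel {x. 2 * x - e \<in> B}"
    by simp
  then show ?thesis
    by (simp add: ennreal_divide_times mult.commute[of 2] ennreal_mult_divide_eq)
qed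

lemma bdig_doubling:
  fixes x :: real and e :: nat
  assumes "e \<le> 1" and y: "2 * x - e \<in> {0..<1}"
  shows "x \<in> {0..<1}" "bdig x 1 = e" "d \<ge> 1 \<Longrightarrow> bdig x (Suc d) = bdig (2 * x - e) d"
proof -
  show "x \<in> {0..<1}" using y \<open>e \<le> 1\<close> by auto
  have "\<lfloor>2 * x\<rfloor> = int e" using y by (intro floor_unique) auto
  then show "bdig x 1 = e" using \<open>e \<le> 1\<close> by (auto simp: bdig_def le_Suc_eq)
  assume "d \<ge> 1"
  have "2^Suc d * x = 2^d * (2 * x - e) + of_int (int (2^d * e))"
    by (simp add: algebra_simps)
  then have "\<lfloor>2^Suc d * x\<rfloor> = \<lfloor>2^d * (2 * x - e)\<rfloor> + int (2^d * e)"
    by (metis floor_add_int)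
  moreover have "even (int (2^d * e))" using \<open>d \<ge> 1\<close> by (cases d) auto
  ultimately show "bdig x (Suc d) = bdig (2 * x - e) d"
    unfolding bdig_def by (metis even_iff_mod_2_eq_zero mod_add_right_eq add.right_neutral)
qed

lemma doubling_first_digit: "x \<in> {0..<1} \<Longrightarrow> 2 * x - bdig x 1 \<in> {0..<1}"
proof -
  assume "x \<in> {0..<1}"
  then have "\<lfloor>2 * x\<rfloor> \<in> {0, 1}" by (auto simp: floor_eq_iff)
  then have "real (bdig x 1) = real_of_int \<lfloor>2 * x\<rfloor>" by (auto simp: bdig_def)
  then show ?thesis by simp linarith
qed

definition digit_cylinder :: "nat set \<Rightarrow> (nat \<Rightarrow> nat) \<Rightarrow> real set" where
  "digit_cylinder D v = {x\<in>{0..<1}. \<forall>d\<in>D. bdig x d = v d}"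

lemma digit_cylinder_measurable [measurable]: "finite D \<Longrightarrow> digit_cylinder D v \<in> sets borel"
  unfolding digit_cylinder_def by measurable

lemma digit_cylinder_Int_first_digit:
  assumes D: "\<forall>d\<in>D. d \<ge> 1" and "e \<le> 1"
  shows "digit_cylinder D v \<inter> {x. bdig x 1 = e} =
     (if 1 \<in> D \<and> v 1 \<noteq> e then {}
      else {x. 2 * x - e \<in> digit_cylinder {d. d \<ge> 1 \<and> Suc d \<in> D} (\<lambda>d. v (Suc d))})"
proof -
  let ?D' = "{d. d \<ge> 1 \<and> Suc d \<in> D}" and ?v' = "\<lambda>d. v (Suc d)"
  have "x \<in> digit_cylinder D v \<and> bdig x 1 = e \<longleftrightarrow>
      \<not> (1 \<in> D \<and> v 1 \<noteq> e) \<and> 2 * x - e \<in> digit_cylinder ?D' ?v'" for x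
  proof
    assume x: "x \<in> digit_cylinder D v \<and> bdig x 1 = e"
    then have y: "2 * x - e \<in> {0..<1}"
      using doubling_first_digit[of x] by (simp add: digit_cylinder_def)
    have "bdig (2 * x - e) d = v (Suc d)" if "d \<ge> 1" "Suc d \<in> D" for d
      using x bdig_doubling(3)[OF \<open>e \<le> 1\<close> y that(1)] that(2) by (simp add: digit_cylinder_def)
    then show "\<not> (1 \<in> D \<and> v 1 \<noteq> e) \<and> 2 * x - e \<in> digit_cylinder ?D' ?v'"
      using x y by (auto simp: digit_cylinder_def)
  next
    assume r: "\<not> (1 \<in> D \<and> v 1 \<noteq> e) \<and> 2 * x - e \<in> digit_cylinder ?D' ?v'"
    then have y: "2 * x - e \<in> {0..<1}" by (auto simp: digit_cylinder_def)
    have "bdig x d = v d" if dD: "d \<in> D" for d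
    proof (cases "d = 1")
      case True then show ?thesis using r bdig_doubling(2)[OF \<open>e \<le> 1\<close> y] dD by auto
    next
      case False
      then obtain d' where d': "d = Suc d'" "d' \<ge> 1" using D dD by (cases d) auto
      then show ?thesis
        using r bdig_doubling(3)[OF \<open>e \<le> 1\<close> y d'(2)] dD by (auto simp: digit_cylinder_def)
    qed
    then show "x \<in> digit_cylinder D v \<and> bdig x 1 = e"
      using bdig_doubling(1,2)[OF \<open>e \<le> 1\<close> y] by (auto simp: digit_cylinder_def)
  qed
  then show ?thesis by auto
qed

lemma card_shift_down:
  assumes "\<forall>d\<in>D. d \<ge> 1" "finite D"
  shows "card D = card {d. d \<ge> 1 \<and> Suc d \<in> D} + (if 1 \<in> D then 1 else 0)"
proof -
  have "Suc ` {d. d \<ge> 1 \<and> Suc d \<in> D} = D - {1}"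
  proof (intro set_eqI iffI)
    fix d assume d: "d \<in> D - {1}"
    then obtain d' where "d = Suc d'" "d' \<ge> 1" using assms(1) by (cases d) auto
    then show "d \<in> Suc ` {d. d \<ge> 1 \<and> Suc d \<in> D}" using d by auto
  qed auto
  then have "card {d. d \<ge> 1 \<and> Suc d \<in> D} = card (D - {1})"
    by (metis card_image inj_Suc inj_on_subset subset_UNIV)
  moreover have "1 \<in> D \<Longrightarrow> card D \<ge> 1" using assms(2) card_gt_0_iff[of D] by auto
  ultimately show ?thesis using assms(2) by (auto simp: card_Diff_singleton)
qed

text \<open>Induction on a bound for the digit positions; splitting by the first digit and applying the
  doubling map moves every position down by one and halves the measure.\<close>
lemma emeasure_digit_cylinder:
  assumes "finite D" "D \<subseteq> {1..n}" "\<forall>d\<in>D. v d \<le> 1"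
  shows "emeasure lborel (digit_cylinder D v) = ennreal ((1/2)^card D)"
  using assms
proof (induction n arbitrary: D v)
  case 0
  then have "D = {}" by auto
  moreover have "digit_cylinder {} v = {0..<1}" by (auto simp: digit_cylinder_def)
  ultimately show ?case by simp
next
  case (Suc n)
  let ?D' = "{d. d \<ge> 1 \<and> Suc d \<in> D}" and ?v' = "\<lambda>d. v (Suc d)"
  have D: "\<forall>d\<in>D. d \<ge> 1" using Suc.prems by auto
  have D': "finite ?D'" by (rule finite_subset[of _ "{..n}"]) (use Suc.prems in auto)
  have IH: "emeasure lborel (digit_cylinder ?D' ?v') = ennreal ((1/2)^card ?D')"
    by (rule Suc.IH) (use Suc.prems D' in auto)
  have half: "emeasure lborel (digit_cylinder D v \<inter> {x. bdig x 1 = e}) =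
      ennreal (if 1 \<in> D \<and> v 1 \<noteq> e then 0 else (1/2)^card ?D' / 2)" if "e \<le> 1" for e
  proof -
    have "ennreal ((1/2)^card ?D') / 2 = ennreal ((1/2)^card ?D' / 2)"
      using divide_ennreal[of "(1/2)^card ?D'" 2] by simp
    then show ?thesis
      unfolding digit_cylinder_Int_first_digit[OF D that]
      using emeasure_lborel_doubling_preimage[OF digit_cylinder_measurable[OF D'], of e] IH
      by auto
  qed
  have split: "digit_cylinder D v = (digit_cylinder D v \<inter> {x. bdig x 1 = 0})
      \<union> (digit_cylinder D v \<inter> {x. bdig x 1 = 1})"
    using bdig_le_1 by (auto simp: le_Suc_eq)
  have "digit_cylinder D v \<inter> {x. bdig x 1 = e} \<in> sets lborel" for e
    using Suc.prems(1) by measurable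
  then have "emeasure lborel (digit_cylinder D v)
      = emeasure lborel (digit_cylinder D v \<inter> {x. bdig x 1 = 0})
        + emeasure lborel (digit_cylinder D v \<inter> {x. bdig x 1 = 1})"
    by (subst split, intro plus_emeasure[symmetric]) auto
  also have "\<dots> = ennreal ((if 1 \<in> D \<and> v 1 \<noteq> 0 then 0 else (1/2)^card ?D' / 2)
      + (if 1 \<in> D \<and> v 1 \<noteq> 1 then 0 else (1/2)^card ?D' / 2))"
    using half[of 0] half[of 1] by (subst ennreal_plus) auto
  also have "\<dots> = ennreal ((1/2)^card D)"
  proof (cases "1 \<in> D")
    case True
    then have "card D = card ?D' + 1" "v 1 = 0 \<or> v 1 = 1"
      using card_shift_down[OF D Suc.prems(1)] Suc.prems(3) by auto
    then show ?thesis using True by auto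
  next
    case False
    then show ?thesis using card_shift_down[OF D Suc.prems(1)] by simp
  qed
  finally show ?case .
qed

section \<open>Second moments of block counts\<close>

abbreviation unit_lebesgue :: "real measure" where
  "unit_lebesgue \<equiv> restrict_space lborel {0..<1}"

lemma finite_measure_unit_lebesgue: "finite_measure unit_lebesgue"
  by (rule finite_measureI) (simp add: emeasure_restrict_space space_restrict_space)

lemma measure_unit_lebesgue: "A \<subseteq> {0..<1} \<Longrightarrow> measure unit_lebesgue A = measure lborel A"
  by (rule measure_restrict_space) auto

lemma integrable_unit_lebesgue:
  fixes f :: "real \<Rightarrow> real"
  assumes "f \<in> borel_measurable borel" "\<And>x. \<bar>f x\<bar> \<le> B"
  shows "integrable unit_lebesgue f"
proof (rule finite_measure.integrable_const_bound[OF finite_measure_unit_lebesgue, where B = B])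
  show "f \<in> borel_measurable unit_lebesgue"
    using assms(1) by (intro measurable_restrict_space1) simp
qed (use assms(2) in simp)

lemma integral_unit_lebesgue_const: "integral\<^sup>L unit_lebesgue (\<lambda>x. c) = (c::real)"
  using measure_unit_lebesgue[of "{0..<1}"] by (simp add: space_restrict_space)

definition block_set :: "nat list \<Rightarrow> nat \<Rightarrow> real set" where
  "block_set w i = {x\<in>{0..<1}. block_at x w i}"

lemma block_set_eq_digit_cylinder:
  "block_set w i = digit_cylinder {i..<i + length w} (\<lambda>d. w ! (d - i))"
proof -
  have "block_at x w i \<longleftrightarrow> (\<forall>d\<in>{i..<i + length w}. bdig x d = w ! (d - i))" for x
  proof
    assume "block_at x w i"
    then show "\<forall>d\<in>{i..<i + length w}. bdig x d = w ! (d - i)"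
      unfolding block_at_def by (metis add_diff_inverse_nat atLeastLessThan_iff less_diff_conv2
        not_less add.commute)
  next
    assume "\<forall>d\<in>{i..<i + length w}. bdig x d = w ! (d - i)"
    then show "block_at x w i"
      unfolding block_at_def by (metis add_diff_cancel_left' atLeastLessThan_iff le_add1
        nat_add_left_cancel_less)
  qed
  then show ?thesis by (auto simp: block_set_def digit_cylinder_def)
qed

lemma block_set_measurable [measurable]: "block_set w i \<in> sets borel"
  unfolding block_set_eq_digit_cylinder by (rule digit_cylinder_measurable) simp

lemma block_set_subset: "block_set w i \<subseteq> {0..<1}"
  by (auto simp: block_set_def)

definition block_dev :: "nat list \<Rightarrow> nat \<Rightarrow> real \<Rightarrow> real" where
  "block_dev w i x = indicator (block_set w i) x - (1/2)^length w"

lemma block_dev_measurable [measurable]: "block_dev w i \<in> borel_measurable borel"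
  unfolding block_dev_def by measurable

lemma abs_block_dev_le_1: "\<bar>block_dev w i x\<bar> \<le> 1"
  using power_le_one[of "1/2::real" "length w"] by (auto simp: block_dev_def indicator_def)

lemma integrable_block_dev_product: "integrable unit_lebesgue (\<lambda>x. block_dev w i x * block_dev w j x)"
  by (rule integrable_unit_lebesgue[where B = 1])
    (simp_all add: abs_mult mult_le_one abs_block_dev_le_1)

context
  fixes w :: "nat list"
  assumes w: "set w \<subseteq> {0, 1}"
begin

lemma measure_digit_cylinder_word:
  assumes "finite D" "D \<subseteq> {1..n}" "\<And>d. d \<in> D \<Longrightarrow> v d < length w" 
  shows "measure lborel (digit_cylinder D (\<lambda>d. w ! v d)) = (1/2)^card D"
proof -
  have "w ! v d \<le> 1" if "d \<in> D" for d
    using nth_mem[OF assms(3)[OF that]] w by auto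
  then show ?thesis
    using emeasure_digit_cylinder[OF assms(1,2)] by (simp add: measure_def)
qed

lemma measure_block_set: "i \<ge> 1 \<Longrightarrow> measure lborel (block_set w i) = (1/2)^length w"
  unfolding block_set_eq_digit_cylinder
  by (subst measure_digit_cylinder_word[where n = "i + length w"]) auto

lemma measure_block_set_Int:
  assumes "i \<ge> 1" "i + length w \<le> j"
  shows "measure lborel (block_set w i \<inter> block_set w j) = ((1/2)^length w)^2"
proof -
  let ?D1 = "{i..<i + length w}" and ?D2 = "{j..<j + length w}"
  let ?v = "\<lambda>d. if d < i + length w then d - i else d - j"
  have "(\<forall>d\<in>?D1 \<union> ?D2. bdig x d = w ! ?v d) \<longleftrightarrow>
      (\<forall>d\<in>?D1. bdig x d = w ! (d - i)) \<and> (\<forall>d\<in>?D2. bdig x d = w ! (d - j))" for x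
  proof -
    have "(\<forall>d\<in>?D1 \<union> ?D2. bdig x d = w ! ?v d) \<longleftrightarrow>
        (\<forall>d\<in>?D1. bdig x d = w ! ?v d) \<and> (\<forall>d\<in>?D2. bdig x d = w ! ?v d)"
      by (rule ball_Un)
    also have "(\<forall>d\<in>?D1. bdig x d = w ! ?v d) \<longleftrightarrow> (\<forall>d\<in>?D1. bdig x d = w ! (d - i))"
      by (intro ball_cong) auto
    also have "(\<forall>d\<in>?D2. bdig x d = w ! ?v d) \<longleftrightarrow> (\<forall>d\<in>?D2. bdig x d = w ! (d - j))"
      using assms(2) by (intro ball_cong) auto
    finally show ?thesis .
  qed
  then have "block_set w i \<inter> block_set w j = digit_cylinder (?D1 \<union> ?D2) (\<lambda>d. w ! ?v d)"
    unfolding block_set_eq_digit_cylinder digit_cylinder_def by blast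
  moreover have "card (?D1 \<union> ?D2) = 2 * length w"
    using assms(2) by (subst card_Un_disjoint) auto
  moreover have "measure lborel (digit_cylinder (?D1 \<union> ?D2) (\<lambda>d. w ! ?v d)) = (1/2)^card (?D1 \<union> ?D2)"
    by (rule measure_digit_cylinder_word[where n = "j + length w"]) (use assms in auto)
  ultimately show ?thesis by (simp add: power_mult[symmetric] mult.commute)
qed

lemma integral_block_dev_product_le:
  assumes "i \<ge> 1" "j \<ge> 1"
  shows "integral\<^sup>L unit_lebesgue (\<lambda>x. block_dev w i x * block_dev w j x)
    \<le> (if j < i + length w \<and> i < j + length w then 1 else 0)"
proof (cases "j < i + length w \<and> i < j + length w")
  case True
  have "integral\<^sup>L unit_lebesgue (\<lambda>x. block_dev w i x * block_dev w j x) \<le> integral\<^sup>L unit_lebesgue (\<lambda>x. 1)"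
  proof (rule integral_mono[OF integrable_block_dev_product])
    show "integrable unit_lebesgue (\<lambda>x. 1::real)"
      by (rule integrable_unit_lebesgue[where B = 1]) auto
    show "block_dev w i x * block_dev w j x \<le> 1" for x
      using abs_block_dev_le_1[of w i x] abs_block_dev_le_1[of w j x]
      by (metis abs_ge_zero abs_le_D1 abs_mult mult_le_one)
  qed
  also have "\<dots> = 1" by (rule integral_unit_lebesgue_const)
  finally show ?thesis using True by simp
next
  case False
  let ?p = "(1/2::real)^length w" and ?I = "\<lambda>A. indicator A :: real \<Rightarrow> real"
  let ?Ei = "block_set w i" and ?Ej = "block_set w j"
  have int: "integrable unit_lebesgue (?I A)" if "A \<in> sets borel" for A
    by (rule integrable_unit_lebesgue[where B = 1]) (use that in auto)
  have "integral\<^sup>L unit_lebesgue (\<lambda>x. block_dev w i x * block_dev w j x)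
      = integral\<^sup>L unit_lebesgue (\<lambda>x. ?I (?Ei \<inter> ?Ej) x - ?p * ?I ?Ei x - ?p * ?I ?Ej x + ?p^2)"
    by (simp add: block_dev_def indicator_inter_arith algebra_simps power2_eq_square)
  also have "\<dots> = measure lborel (?Ei \<inter> ?Ej) - ?p * measure lborel ?Ei - ?p * measure lborel ?Ej + ?p^2"
    using block_set_subset[of w i] block_set_subset[of w j]
    by (simp add: int integrable_unit_lebesgue[where B = "?p^2"] Int_absorb2 le_infI1
      measure_unit_lebesgue del: power_one_over)
  also have "measure lborel (?Ei \<inter> ?Ej) = ?p^2"
  proof -
    have "i + length w \<le> j \<or> j + length w \<le> i" using False by auto
    then show ?thesis
      using measure_block_set_Int[OF assms(1)] measure_block_set_Int[OF assms(2)] Int_commute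
      by metis
  qed
  finally show ?thesis using measure_block_set assms by (simp add: power2_eq_square)
qed

end

definition block_dev_sum :: "nat list \<Rightarrow> nat \<Rightarrow> real \<Rightarrow> real" where
  "block_dev_sum w N x = (\<Sum>i\<in>{1..N}. block_dev w i x)"

lemma block_dev_sum_measurable [measurable]: "block_dev_sum w N \<in> borel_measurable borel"
  unfolding block_dev_sum_def by measurable

lemma real_block_count: "real (block_count x w N) = (\<Sum>i\<in>{1..N}. if block_at x w i then 1 else 0)"
  by (simp add: sum.If_cases Int_def block_count_def)

lemma block_dev_sum_eq:
  assumes "x \<in> {0..<1}"
  shows "block_dev_sum w N x = real (block_count x w N) - real N * (1/2)^length w"
proof -
  have "block_dev_sum w N x = (\<Sum>i\<in>{1..N}. indicator (block_set w i) x) - real N * (1/2)^length w"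
    by (simp add: block_dev_sum_def block_dev_def sum_subtractf)
  also have "(\<Sum>i\<in>{1..N}. indicator (block_set w i) x) = real (block_count x w N)"
    unfolding real_block_count using assms by (intro sum.cong) (auto simp: block_set_def)
  finally show ?thesis .
qed

lemma card_near_le: "card {j\<in>{1..N}. j < i + L \<and> i < j + L} \<le> 2 * L"
proof -
  have "card {j\<in>{1..N}. j < i + L \<and> i < j + L} \<le> card {i - L<..<i + L}"
    by (intro card_mono) auto
  then show ?thesis by simp
qed

text \<open>Blocks at positions at least \<open>length w\<close> apart are independent, so only the \<open>2 length w\<close>
  nearby positions contribute to the variance.\<close>
lemma integral_block_dev_sum_square:
  assumes "set w \<subseteq> {0, 1}"
  shows "integral\<^sup>L unit_lebesgue (\<lambda>x. (block_dev_sum w N x)^2) \<le> 2 * length w * N"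
proof -
  let ?I = "{1..N}"
  have "integral\<^sup>L unit_lebesgue (\<lambda>x. (block_dev_sum w N x)^2)
      = (\<Sum>i\<in>?I. \<Sum>j\<in>?I. integral\<^sup>L unit_lebesgue (\<lambda>x. block_dev w i x * block_dev w j x))"
    by (simp add: block_dev_sum_def power2_eq_square sum_product integrable_block_dev_product
      Bochner_Integration.integral_sum Bochner_Integration.integrable_sum)
  also have "\<dots> \<le> (\<Sum>i\<in>?I. \<Sum>j\<in>?I. if j < i + length w \<and> i < j + length w then 1 else 0)"
    using integral_block_dev_product_le[OF assms] by (intro sum_mono) auto
  also have "\<dots> = (\<Sum>i\<in>?I. real (card {j\<in>?I. j < i + length w \<and> i < j + length w}))"
    by (simp add: sum.If_cases Int_def)
  also have "\<dots> \<le> (\<Sum>i\<in>?I. real (2 * length w))"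
    by (intro sum_mono of_nat_mono card_near_le)
  finally show ?thesis by (simp add: mult_ac)
qed

lemma abs_block_dev_sum_le: "\<bar>block_dev_sum w N x\<bar> \<le> N"
proof -
  have "\<bar>block_dev_sum w N x\<bar> \<le> (\<Sum>i\<in>{1..N}. \<bar>block_dev w i x\<bar>)"
    unfolding block_dev_sum_def by (rule sum_abs)
  also have "\<dots> \<le> (\<Sum>i\<in>{1..N}. 1)"
    by (intro sum_mono abs_block_dev_le_1)
  finally show ?thesis by simp
qed

lemma measure_large_block_dev:
  assumes "set w \<subseteq> {0, 1}" and "0 < e" "N \<ge> 1"
  shows "measure lborel {x\<in>{0..<1}. e * N \<le> \<bar>block_dev_sum w N x\<bar>} \<le> 2 * length w / (e^2 * N)"
proof -
  have int: "integrable unit_lebesgue (\<lambda>x. (block_dev_sum w N x)^2)"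
  proof (rule integrable_unit_lebesgue[where B = "(real N)^2"])
    show "\<bar>(block_dev_sum w N x)^2\<bar> \<le> (real N)^2" for x
      using abs_block_dev_sum_le[of w N x] abs_le_square_iff[of "block_dev_sum w N x" "real N"]
      by simp
  qed measurable
  have "e * N \<le> \<bar>block_dev_sum w N x\<bar> \<longleftrightarrow> (e * N)^2 \<le> (block_dev_sum w N x)^2" for x
    using abs_le_square_iff[of "e * N" "block_dev_sum w N x"] assms(2) by simp
  then have "{x\<in>{0..<1}. e * N \<le> \<bar>block_dev_sum w N x\<bar>}
      = {x\<in>space unit_lebesgue. (e * N)^2 \<le> (block_dev_sum w N x)^2}"
    by simp
  then have "measure lborel {x\<in>{0..<1}. e * N \<le> \<bar>block_dev_sum w N x\<bar>}
      = measure unit_lebesgue {x\<in>space unit_lebesgue. (e * N)^2 \<le> (block_dev_sum w N x)^2}"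
    by (metis (no_types, lifting) measure_unit_lebesgue mem_Collect_eq subsetI)
  also have "\<dots> \<le> integral\<^sup>L unit_lebesgue (\<lambda>x. (block_dev_sum w N x)^2) / (e * N)^2"
    using assms(2,3) by (intro integral_Markov_inequality_measure[OF int, where A = "{}"]) simp_all
  also have "\<dots> \<le> (2 * length w * N) / (e * N)^2"
    by (intro divide_right_mono integral_block_dev_sum_square[OF assms(1)]) simp
  also have "\<dots> = 2 * length w / (e^2 * N)"
    using assms(3) by (simp add: power2_eq_square field_simps)
  finally show ?thesis .
qed

lemma LIMSEQ_ratio_from_squares:
  fixes f :: "nat \<Rightarrow> nat"
  assumes mono: "\<And>a b. a \<le> b \<Longrightarrow> f a \<le> f b"
    and lip: "\<And>a b. a \<le> b \<Longrightarrow> f b \<le> f a + (b - a)"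
    and lim: "(\<lambda>n. real (f (n^2)) / real (n^2)) \<longlonglongrightarrow> p"
  shows "(\<lambda>N. real (f N) / real N) \<longlonglongrightarrow> p"
proof -
  define g where "g n = real (f (n^2)) / real (n^2)" for n
  define lo where "lo n = g n * (real n / real (Suc n))^2" for n
  define hi where "hi n = g n + real (2 * n + 1) / real (n^2)" for n
  have "lo \<longlonglongrightarrow> p * 1^2"
    unfolding lo_def g_def by (intro tendsto_mult lim tendsto_power LIMSEQ_n_over_Suc_n)
  moreover have "(\<lambda>n. real (2 * n + 1) / real (n^2)) \<longlonglongrightarrow> 0"
    by real_asymp
  then have "hi \<longlonglongrightarrow> p + 0"
    unfolding hi_def g_def by (intro tendsto_add lim)
  moreover have "filterlim floor_sqrt sequentially sequentially"
    unfolding filterlim_at_top eventually_sequentially by (metis le_floor_sqrtI)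
  ultimately have lo: "(\<lambda>N. lo (floor_sqrt N)) \<longlonglongrightarrow> p" and hi: "(\<lambda>N. hi (floor_sqrt N)) \<longlonglongrightarrow> p"
    using filterlim_compose by fastforce+
  have "lo (floor_sqrt N) \<le> real (f N) / real N \<and> real (f N) / real N \<le> hi (floor_sqrt N)"
    if "N \<ge> 1" for N
  proof -
    define q where "q = floor_sqrt N"
    have q: "q \<ge> 1" "q^2 \<le> N" "N < (Suc q)^2"
      using that Suc_floor_sqrt_power2_gt[of N] by (auto simp: q_def Suc_le_eq)
    have "N - q^2 \<le> 2 * q + 1" using q(3) by (simp add: power2_eq_square)
    then have fN: "f (q^2) \<le> f N" "f N \<le> f (q^2) + (2 * q + 1)"
      using mono[OF q(2)] lip[OF q(2)] by auto
    have "lo q = real (f (q^2)) / real ((Suc q)^2)"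
      using q(1) by (simp add: lo_def g_def power_divide)
    also have "\<dots> \<le> real (f N) / real N"
    proof (rule frac_le)
      show "real N \<le> real ((Suc q)^2)" using q(3) by linarith
    qed (use fN(1) that in auto)
    finally have "lo q \<le> real (f N) / real N" .
    moreover have "real (f N) / real N \<le> real (f (q^2) + (2 * q + 1)) / real (q^2)"
      using fN(2) q that by (intro frac_le) auto
    then have "real (f N) / real N \<le> hi q"
      by (simp add: hi_def g_def add_divide_distrib)
    ultimately show ?thesis by (simp add: q_def)
  qed
  then show ?thesis
    by (intro real_tendsto_sandwich[OF _ _ lo hi]) (auto simp: eventually_sequentially)
qed

section \<open>Almost every number is normal\<close>

lemma block_count_mono: "a \<le> b \<Longrightarrow> block_count x w a \<le> block_count x w b"
  unfolding block_count_def by (rule card_mono) auto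

lemma block_count_le_add: "a \<le> b \<Longrightarrow> block_count x w b \<le> block_count x w a + (b - a)"
proof -
  assume "a \<le> b"
  have "{i\<in>{1..b}. block_at x w i} \<subseteq> {i\<in>{1..a}. block_at x w i} \<union> {a<..b}"
    by auto
  then have "block_count x w b \<le> card ({i\<in>{1..a}. block_at x w i} \<union> {a<..b})"
    unfolding block_count_def by (intro card_mono) auto
  also have "\<dots> \<le> block_count x w a + card {a<..b}"
    unfolding block_count_def by (rule card_Un_le)
  finally show ?thesis by simp
qed

lemma block_at_measurable [measurable]: "Measurable.pred borel (\<lambda>x. block_at x w i)"
  unfolding block_at_def by measurable

lemma normal2_measurable: "normal2 \<in> sets borel"
proof -
  have "normal2 = {x\<in>{0..1}. \<forall>w. w \<noteq> [] \<and> set w \<subseteq> {0, 1} \<longrightarrow>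
      ((\<lambda>N. (\<Sum>i\<in>{1..N}. if block_at x w i then 1 else 0::real) / real N) \<longlonglongrightarrow> 1 / 2 ^ length w)}"
  proof -
    have "(\<lambda>N. (\<Sum>i\<in>{1..N}. if block_at x w i then 1 else 0::real) / real N) =
        (\<lambda>N. real (card {i \<in> {1..N}. \<forall>j<length w. bdig x (i + j) = w ! j}) / real N)" for x w
      using real_block_count[of x w] by (simp add: block_count_def block_at_def)
    then show ?thesis unfolding normal2_def by simp
  qed
  also have "\<dots> \<in> sets borel"
    by measurable
  finally show ?thesis .
qed

definition large_dev_set :: "nat list \<Rightarrow> real \<Rightarrow> nat \<Rightarrow> real set" where
  "large_dev_set w e n = {x\<in>{0..<1}. e * real (n^2) \<le> \<bar>block_dev_sum w (n^2) x\<bar>}"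

lemma large_dev_set_measurable [measurable]: "large_dev_set w e n \<in> sets borel"
  unfolding large_dev_set_def by measurable

text \<open>Borel--Cantelli along the squares, where Chebyshev's bound \<open>O(1/n^2)\<close> is summable.\<close>
lemma AE_eventually_not_large_dev:
  assumes "set w \<subseteq> {0, 1}" "0 < e"
  shows "AE x in lborel. eventually (\<lambda>n. x \<in> space lborel - large_dev_set w e n) sequentially"
proof (rule borel_cantelli_AE1)
  show "large_dev_set w e n \<in> sets lborel" for n by simp
  show "emeasure lborel (large_dev_set w e n) < \<infinity>" for n
  proof -
    have "emeasure lborel (large_dev_set w e n) \<le> emeasure lborel {0..<1::real}"
      by (rule emeasure_mono) (auto simp: large_dev_set_def)
    then show ?thesis by (simp add: le_less_trans)
  qed
  let ?C = "2 * real (length w) / e^2"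
  show "summable (\<lambda>n. measure lborel (large_dev_set w e n))"
  proof (rule summable_comparison_test'[where g = "\<lambda>n. ?C * inverse (real n ^ 2)" and N = 1])
    show "summable (\<lambda>n. ?C * inverse (real n ^ 2))"
      by (intro summable_mult inverse_power_summable) simp
    fix n :: nat assume "n \<ge> 1"
    then have "measure lborel (large_dev_set w e n) \<le> 2 * length w / (e^2 * real (n^2))"
      unfolding large_dev_set_def by (intro measure_large_block_dev assms) simp
    also have "\<dots> = ?C * inverse (real n ^ 2)" by (simp add: field_simps)
    finally show "norm (measure lborel (large_dev_set w e n)) \<le> ?C * inverse (real n ^ 2)" by simp
  qed
qed

lemma normal2_if_eventually_not_large_dev:
  assumes x: "x \<in> {0..<1}"
    and small: "\<And>w m. set w \<subseteq> {0, 1} \<Longrightarrow>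
      eventually (\<lambda>n. x \<notin> large_dev_set w (1 / real (Suc m)) n) sequentially"
  shows "x \<in> normal2"
  unfolding normal2_iff
proof (intro conjI allI impI)
  fix w :: "nat list" assume w: "w \<noteq> [] \<and> set w \<subseteq> {0, 1}"
  let ?p = "(1/2::real)^length w"
  have "(\<lambda>n. real (block_count x w (n^2)) / real (n^2)) \<longlonglongrightarrow> ?p"
  proof (rule LIMSEQ_I)
    fix r :: real assume "0 < r"
    then obtain m where m: "1 / real (Suc m) < r"
      using reals_Archimedean[of r] by (auto simp: inverse_eq_divide)
    obtain n0 where n0: "\<And>n. n \<ge> n0 \<Longrightarrow> x \<notin> large_dev_set w (1 / real (Suc m)) n"
      using small[of w m] w unfolding eventually_sequentially by auto
    have "norm (real (block_count x w (n^2)) / real (n^2) - ?p) < r" if "n \<ge> max n0 1" for n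
    proof -
      have "\<bar>real (block_count x w (n^2)) - real (n^2) * ?p\<bar> < 1 / real (Suc m) * real (n^2)"
        using n0[of n] that x block_dev_sum_eq[OF x, of w "n^2"] by (auto simp: large_dev_set_def)
      then have "\<bar>real (block_count x w (n^2)) - real (n^2) * ?p\<bar> / real (n^2) < 1 / real (Suc m)"
        using that by (simp add: divide_less_eq)
      moreover have "norm (real (block_count x w (n^2)) / real (n^2) - ?p)
          = \<bar>real (block_count x w (n^2)) - real (n^2) * ?p\<bar> / real (n^2)"
        using that by (simp add: field_simps)
      ultimately show ?thesis using m by linarith
    qed
    then show "\<exists>n0. \<forall>n\<ge>n0. norm (real (block_count x w (n^2)) / real (n^2) - ?p) < r"
      by blast
  qed
  then show "(\<lambda>N. real (block_count x w N) / real N) \<longlonglongrightarrow> 1 / 2 ^ length w"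
    using LIMSEQ_ratio_from_squares[OF block_count_mono block_count_le_add]
    by (simp add: power_one_over)
qed (use x in auto)

lemma AE_normal2: "AE x in lborel. x \<in> {0..<1} \<longrightarrow> x \<in> normal2"
proof -
  have "AE x in lborel. set w \<subseteq> {0, 1} \<longrightarrow>
      eventually (\<lambda>n. x \<notin> large_dev_set w (1 / real (Suc m)) n) sequentially" for w m
    using AE_eventually_not_large_dev[of w "1 / real (Suc m)"] by (cases "set w \<subseteq> {0, 1}") auto
  then have "AE x in lborel. \<forall>w m. set w \<subseteq> {0, 1} \<longrightarrow>
      eventually (\<lambda>n. x \<notin> large_dev_set w (1 / real (Suc m)) n) sequentially"
    by (simp add: AE_all_countable)
  then show ?thesis
    by (rule AE_mp) (auto intro!: AE_I2 normal2_if_eventually_not_large_dev)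
qed

lemma null_sets_unit_interval_diff_normal2: "{0..1} - normal2 \<in> null_sets lborel"
proof -
  obtain N where N: "{x. \<not> (x \<in> {0..<1} \<longrightarrow> x \<in> normal2)} \<subseteq> N" "N \<in> null_sets lborel"
    using AE_normal2 by (auto elim!: AE_E simp: null_sets_def)
  then have "{0..1} - normal2 \<subseteq> N \<union> {1}" by auto
  moreover have "N \<union> {1} \<in> null_sets lborel"
    by (rule null_sets.Un[OF N(2)]) (simp add: null_sets_def)
  ultimately show ?thesis
    using normal2_measurable by (auto intro: null_sets_subset)
qed

lemma emeasure_normal2: "emeasure lborel normal2 = 1"
proof -
  have null: "{0..1} - normal2 \<in> null_sets lborel"
    by (rule null_sets_unit_interval_diff_normal2)
  have "emeasure lborel normal2 + emeasure lborel ({0..1} - normal2)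
      = emeasure lborel (normal2 \<union> ({0..1} - normal2))"
    using normal2_measurable null by (intro plus_emeasure) auto
  also have "normal2 \<union> ({0..1} - normal2) = {0..1}"
    using normal2_subset by auto
  finally show ?thesis using null_setsD1[OF null] by simp
qed

lemma R_image_normal2: "R ` normal2 \<subseteq> {0..1} - normal2"
  using R_normal2_in_unit_interval R_normal2_not_normal2 by auto

lemma emeasure_R_preimage_non_normal2: "emeasure lborel (R -` ({0..1} - normal2) \<inter> {0..1}) = 1"
proof -
  let ?P = "R -` ({0..1} - normal2) \<inter> {0..1}"
  have "?P \<in> sets lborel"
    using measurable_sets[OF R_measurable, of "{0..1} - normal2"] normal2_measurable
    by (simp add: sets_restrict_space_iff space_restrict_space)
  then have "emeasure lborel normal2 \<le> emeasure lborel ?P"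
    using R_image_normal2 normal2_subset by (intro emeasure_mono) auto
  moreover have "emeasure lborel ?P \<le> emeasure lborel {0..1::real}"
    by (intro emeasure_mono) auto
  ultimately show ?thesis
    using emeasure_normal2 by simp
qed

theorem proposition5p2:
  shows "R ` normal2 \<subseteq> {0..1} - normal2
    \<and> R \<in> borel_measurable (restrict_space borel {0..1})
    \<and> ({0..1} - normal2) \<in> null_sets lborel
    \<and> emeasure lborel (R -` ({0..1} - normal2) \<inter> {0..1}) = 1"
  using R_image_normal2 R_measurable null_sets_unit_interval_diff_normal2
    emeasure_R_preimage_non_normal2
  by blast

end
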